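(* In the setting described in the context, assume $N<\infty$ and $n$ is even. Then $$\frac{\sqrt2}4<\sqrt{\frac{(N-2)N^2}{8(N-1)^3}}\le\sigma f\big(\tfrac n2\big),$$ with equality in the second inequality iff $n=2$ or $n=N-2$.
   Context: Standing setting: Binomial law $\mathrm B_{m,p}(\{k\})=\binom mk p^k(1-p)^{m-k}$; hypergeometric law $\mathrm H_{m,r,b}(\{k\})=\binom rk\binom b{m-k}/\binom{r+b}m$ ($r,b\in\mathbb N_0$, $m\in\{0,\dots,r+b\}$, $k\in\mathbb Z$, binomial coefficients with non-integer lower index being $0$). $P$ is a symmetric (about its mean) hypergeometric or symmetric binomial law with mean $\frac n2$ and standard deviation $\sigma>0$, and $f(k)=P(\{k\})$; $N\in\mathbb N\cup\{\infty\}$ is a population size parameter of $P$ (i.e. $N=\infty$ and $P$ binomial, or $P=\mathrm H_{m,r,b}$ for some $r,b,m$ with $r+b=N$). *)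

theory Defs
  imports Complex_Main
begin

definition hyp_pmf :: "nat \<Rightarrow> nat \<Rightarrow> nat \<Rightarrow> int \<Rightarrow> real" where
  "hyp_pmf m r b k =
     (if 0 \<le> k \<and> k \<le> int m
      then real (r choose nat k) * real (b choose (m - nat k)) / real ((r + b) choose m)
      else 0)"

definition hyp_mean :: "nat \<Rightarrow> nat \<Rightarrow> nat \<Rightarrow> real" where
  "hyp_mean m r b = (\<Sum>k\<in>{0..int m}. real_of_int k * hyp_pmf m r b k)"

definition hyp_var :: "nat \<Rightarrow> nat \<Rightarrow> nat \<Rightarrow> real" where
  "hyp_var m r b = (\<Sum>k\<in>{0..int m}. (real_of_int k - hyp_mean m r b)^2 * hyp_pmf m r b k)"

end

theory Submission
  imports Defs
begin

text \<open>A hypergeometric law is positive exactly on an interval [L, U], so symmetry about n/2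
  forces n = L + U; together with the mean n/2 = m r/N this leaves only r = b (with n = m) or
  N = 2m (with n = r). Writing N = 2a and n = 2j, both cases give
  sigma^2 = j (a - j)/(2a - 1) and f(j) = C(a,j)^2/C(2a,2j).
  The product sigma^2 f(j)^2 is invariant under j \<mapsto> a - j, and for 1 \<le> j \<le> a/2 it strictly
  increases: comparing consecutive terms reduces to the identity
  (x-y)(x-y-1)(2y+1)^2 - y(y+1)(2x-2y-1)^2 = x(x-2y-1) with x = a, y = j.
  Hence its minimum over 1 \<le> j \<le> a - 1 is attained exactly at j = 1 and j = a - 1,
  where it equals (a - 1) a^2/(2a - 1)^3 = (N - 2) N^2/(8 (N - 1)^3) > 1/8.\<close>

section \<open>Binomial identities\<close>

lemma Suc_times_choose_Suc: "Suc k * (n choose Suc k) = (n - k) * (n choose k)"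
  using binomial_absorption[of k n] binomial_absorb_comp[of n k] by simp

lemma real_choose_Suc: "real (n choose Suc k) = real (n choose k) * real (n - k) / real (Suc k)"
proof -
  have "real (Suc k) * real (n choose Suc k) = real (n choose k) * real (n - k)"
    by (simp only: of_nat_mult[symmetric] Suc_times_choose_Suc mult.commute)
  then show ?thesis by (simp add: eq_divide_eq mult.commute del: of_nat_Suc)
qed

lemma Suc_Suc_times_choose:
  "Suc (Suc k) * Suc k * (n choose Suc (Suc k)) = n * (n - 1) * ((n - 2) choose k)"
proof -
  have "Suc (Suc k) * Suc k * (n choose Suc (Suc k)) = Suc k * ((n - 1) choose Suc k) * n"
    using binomial_absorption[of "Suc k" n] by (simp only: mult_ac)
  also have "\<dots> = n * (n - 1) * ((n - 2) choose k)"
  proof -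
    have "n - 1 - 1 = n - 2" by simp
    then have "Suc k * ((n - 1) choose Suc k) = (n - 1) * ((n - 2) choose k)"
      using binomial_absorption[of k "n - 1"] by simp
    then show ?thesis by (simp only: mult_ac)
  qed
  finally show ?thesis .
qed

lemma of_nat_mult_pred: "real (k * (k - 1)) = real k * (real k - 1)"
  by (cases k) (auto simp: algebra_simps)

section \<open>Moments of the hypergeometric law\<close>

lemma sum_int_atLeastAtMost_nat: "(\<Sum>k\<in>{0..int m}. g k) = (\<Sum>k\<le>m. g (int k))"
proof -
  have "{0..int m} = int ` {0..m}" by (simp add: image_int_atLeastAtMost)
  then show ?thesis by (simp add: sum.reindex atLeast0AtMost)
qed

lemma hyp_pmf_nat:
  "k \<le> m \<Longrightarrow> hyp_pmf m r b (int k) = real (r choose k) * real (b choose (m - k)) / real ((r + b) choose m)"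
  by (simp add: hyp_pmf_def)

lemma hyp_pmf_pos_iff:
  assumes "m \<le> r + b"
  shows "0 < hyp_pmf m r b k \<longleftrightarrow> int (m - b) \<le> k \<and> k \<le> int (min m r)"
proof
  assume p: "0 < hyp_pmf m r b k"
  then have k: "0 \<le> k \<and> k \<le> int m" unfolding hyp_pmf_def by (auto split: if_splits)
  with p have "0 < real (r choose nat k) * real (b choose (m - nat k)) / real ((r + b) choose m)"
    unfolding hyp_pmf_def by simp
  then have "r choose nat k \<noteq> 0" "b choose (m - nat k) \<noteq> 0"
    by (metis div_0 less_irrefl mult_zero_left of_nat_0,
        metis div_0 less_irrefl mult_zero_right of_nat_0)
  then show "int (m - b) \<le> k \<and> k \<le> int (min m r)" using k by auto
next
  assume "int (m - b) \<le> k \<and> k \<le> int (min m r)"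
  then show "0 < hyp_pmf m r b k" using assms unfolding hyp_pmf_def by auto
qed

lemma sum_hyp_pmf:
  assumes "m \<le> r + b"
  shows "(\<Sum>k\<le>m. hyp_pmf m r b (int k)) = 1"
proof -
  have "(\<Sum>k\<le>m. hyp_pmf m r b (int k))
      = real (\<Sum>k\<le>m. (r choose k) * (b choose (m - k))) / real ((r + b) choose m)"
    by (simp add: hyp_pmf_nat sum_divide_distrib)
  then show ?thesis using assms by (simp only: vandermonde) simp
qed

lemma sum_times_choose_vandermonde:
  "0 < m \<Longrightarrow> (\<Sum>k\<le>m. k * (r choose k) * (b choose (m - k))) = r * ((r + b - 1) choose (m - 1))"
proof -
  assume "0 < m"
  then obtain m' where Suc: "m = Suc m'" using gr0_implies_Suc by blast
  have "(\<Sum>k\<le>m. k * (r choose k) * (b choose (m - k)))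
      = (\<Sum>k\<le>m'. Suc k * (r choose Suc k) * (b choose (m' - k)))"
    unfolding Suc sum.atMost_Suc_shift by simp
  also have "\<dots> = (\<Sum>k\<le>m'. r * (((r - 1) choose k) * (b choose (m' - k))))"
    by (simp only: binomial_absorption mult.assoc)
  also have "\<dots> = r * ((r - 1 + b) choose m')"
    by (simp add: sum_distrib_left[symmetric] vandermonde)
  also have "\<dots> = r * ((r + b - 1) choose (m - 1))"
    by (cases r) (auto simp: Suc)
  finally show ?thesis .
qed

lemma sum_times_pred_choose_vandermonde:
  "2 \<le> m \<Longrightarrow> (\<Sum>k\<le>m. k * (k - 1) * (r choose k) * (b choose (m - k)))
     = r * (r - 1) * ((r + b - 2) choose (m - 2))"
proof -
  assume "2 \<le> m"
  then obtain m' where m: "m = Suc (Suc m')" by (metis add_2_eq_Suc le_Suc_ex)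
  have "(\<Sum>k\<le>m. k * (k - 1) * (r choose k) * (b choose (m - k)))
      = (\<Sum>k\<le>m'. Suc (Suc k) * Suc k * (r choose Suc (Suc k)) * (b choose (m' - k)))"
    unfolding m sum.atMost_Suc_shift by simp
  also have "\<dots> = (\<Sum>k\<le>m'. r * (r - 1) * (((r - 2) choose k) * (b choose (m' - k))))"
    by (simp only: Suc_Suc_times_choose) (simp only: mult.assoc)
  also have "\<dots> = r * (r - 1) * ((r + b - 2) choose (m - 2))"
    by (cases "r \<ge> 2") (auto simp: m sum_distrib_left[symmetric] vandermonde)
  finally show ?thesis .
qed

lemma divide_eq_of_cross_mult:
  fixes c d m x r :: "'a::field"
  assumes "m * c = d * x" "c \<noteq> 0" "d \<noteq> 0"
  shows "r * x / c = r * m / d"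
  using assms by (simp add: field_simps)

lemma hyp_mean_eq:
  assumes "m \<le> r + b"
  shows "hyp_mean m r b = real m * real r / real (r + b)"
proof (cases "m = 0")
  case True
  then show ?thesis by (simp add: hyp_mean_def hyp_pmf_def)
next
  case False
  have "hyp_mean m r b
      = real (\<Sum>k\<le>m. k * (r choose k) * (b choose (m - k))) / real ((r + b) choose m)"
    unfolding hyp_mean_def sum_int_atLeastAtMost_nat
    by (simp add: hyp_pmf_nat sum_divide_distrib mult.assoc)
  also have "\<dots> = real r * real ((r + b - 1) choose (m - 1)) / real ((r + b) choose m)"
    using False by (simp add: sum_times_choose_vandermonde)
  also have "\<dots> = real m * real r / real (r + b)"
  proof -
    have "m * ((r + b) choose m) = (r + b) * ((r + b - 1) choose (m - 1))"
      using times_binomial_minus1_eq[of m "r + b"] False by simp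
    then have "real m * real ((r + b) choose m) = real (r + b) * real ((r + b - 1) choose (m - 1))"
      by (simp only: of_nat_mult[symmetric])
    moreover have "real ((r + b) choose m) \<noteq> 0" "real (r + b) \<noteq> 0" using assms False by simp_all
    ultimately have "real r * real ((r + b - 1) choose (m - 1)) / real ((r + b) choose m)
        = real r * real m / real (r + b)"
      by (rule divide_eq_of_cross_mult)
    then show ?thesis by (simp only: mult.commute)
  qed
  finally show ?thesis .
qed

lemma hyp_factorial_moment2:
  assumes "m \<le> r + b"
  shows "(\<Sum>k\<le>m. real (k * (k - 1)) * hyp_pmf m r b (int k))
    = real (r * (r - 1)) * real (m * (m - 1)) / real ((r + b) * (r + b - 1))"
proof (cases "2 \<le> m")
  case False
  then have "m = 0 \<or> m = 1" by auto
  then show ?thesis by auto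
next
  case True
  then obtain k where m: "m = Suc (Suc k)" by (metis add_2_eq_Suc le_Suc_ex)
  let ?N = "r + b"
  have "(\<Sum>k\<le>m. real (k * (k - 1)) * hyp_pmf m r b (int k))
      = (\<Sum>k\<le>m. real (k * (k - 1) * (r choose k) * (b choose (m - k))) / real (?N choose m))"
    by (intro sum.cong refl)
      (simp only: atMost_iff hyp_pmf_nat of_nat_mult times_divide_eq_right mult.assoc)
  also have "\<dots> = real (\<Sum>k\<le>m. k * (k - 1) * (r choose k) * (b choose (m - k))) / real (?N choose m)"
    by (simp only: of_nat_sum sum_divide_distrib)
  also have "\<dots> = real (r * (r - 1)) * real ((?N - 2) choose k) / real (?N choose m)"
    by (simp only: sum_times_pred_choose_vandermonde[OF True] of_nat_mult) (simp add: m)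
  also have "\<dots> = real (r * (r - 1)) * real (m * (m - 1)) / real (?N * (?N - 1))"
  proof -
    have "m * (m - 1) * (?N choose m) = ?N * (?N - 1) * ((?N - 2) choose k)"
      using Suc_Suc_times_choose[of k ?N] by (simp only: m diff_Suc_1)
    then have "real (m * (m - 1)) * real (?N choose m) = real (?N * (?N - 1)) * real ((?N - 2) choose k)"
      by (simp only: of_nat_mult[symmetric])
    moreover have "real (?N choose m) \<noteq> 0" "real (?N * (?N - 1)) \<noteq> 0" using assms True by auto
    ultimately show ?thesis by (rule divide_eq_of_cross_mult)
  qed
  finally show ?thesis .
qed

lemma hyp_var_eq:
  assumes "m \<le> r + b"
  shows "hyp_var m r b
    = real m * real r * real b * real (r + b - m) / ((real (r + b))\<^sup>2 * (real (r + b) - 1))"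
proof -
  define \<mu> where "\<mu> = hyp_mean m r b"
  define f where "f = hyp_pmf m r b"
  have "hyp_var m r b = (\<Sum>k\<le>m. (real k - \<mu>)\<^sup>2 * f (int k))"
    unfolding hyp_var_def sum_int_atLeastAtMost_nat \<mu>_def f_def by simp
  also have "\<dots> = (\<Sum>k\<le>m. real (k * (k - 1)) * f (int k) + (1 - 2 * \<mu>) * (real k * f (int k))
      + \<mu>\<^sup>2 * f (int k))"
    by (intro sum.cong refl) (simp add: of_nat_mult_pred power2_eq_square algebra_simps)
  also have "\<dots> = (\<Sum>k\<le>m. real (k * (k - 1)) * f (int k)) + (1 - 2 * \<mu>) * (\<Sum>k\<le>m. real k * f (int k))
      + \<mu>\<^sup>2 * (\<Sum>k\<le>m. f (int k))"
    by (simp add: sum.distrib sum_distrib_left)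
  also have "\<dots> = (\<Sum>k\<le>m. real (k * (k - 1)) * f (int k)) + \<mu> - \<mu>\<^sup>2"
    using sum_hyp_pmf[OF assms]
    by (simp add: \<mu>_def f_def hyp_mean_def sum_int_atLeastAtMost_nat power2_eq_square algebra_simps)
  also have "\<dots> = real m * real r * real b * real (r + b - m) / ((real (r + b))\<^sup>2 * (real (r + b) - 1))"
  proof (cases "2 \<le> r + b")
    case True
    have "r' * (r' - 1) * (m' * (m' - 1)) / (N * (N - 1)) + m' * r' / N - (m' * r' / N)\<^sup>2
      = m' * r' * (N - r') * (N - m') / (N\<^sup>2 * (N - 1))"
      if "N \<noteq> 0" "N \<noteq> 1" for m' r' N :: real
      using that by (simp add: field_simps power2_eq_square)
    from this[of "real (r + b)" "real m" "real r"] True assms show ?thesis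
      unfolding f_def \<mu>_def hyp_factorial_moment2[OF assms] hyp_mean_eq[OF assms]
      unfolding of_nat_mult_pred by (simp add: of_nat_diff ac_simps)
  next
    case False
    then have "r + b = 0 \<or> r + b = 1" by auto
    then show ?thesis
      using assms unfolding f_def \<mu>_def hyp_factorial_moment2[OF assms] hyp_mean_eq[OF assms]
      by (auto simp: le_Suc_eq add_is_1)
  qed
  finally show ?thesis .
qed

lemma hyp_var_pos_iff:
  assumes "m \<le> r + b"
  shows "0 < hyp_var m r b \<longleftrightarrow> 0 < m \<and> m < r + b \<and> 0 < r \<and> 0 < b"
proof
  assume pos: "0 < hyp_var m r b"
  show "0 < m \<and> m < r + b \<and> 0 < r \<and> 0 < b"
  proof (rule ccontr)
    assume "\<not> ?thesis"
    then have "m = 0 \<or> m = r + b \<or> r = 0 \<or> b = 0" using assms by auto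
    then have "hyp_var m r b = 0" unfolding hyp_var_eq[OF assms] by auto
    with pos show False by simp
  qed
next
  assume "0 < m \<and> m < r + b \<and> 0 < r \<and> 0 < b"
  then show "0 < hyp_var m r b" unfolding hyp_var_eq[OF assms] by auto
qed

section \<open>Symmetric hypergeometric laws\<close>

lemma symmetric_support_center:
  fixes f :: "int \<Rightarrow> real"
  assumes support: "\<And>k. 0 < f k \<longleftrightarrow> L \<le> k \<and> k \<le> U" and "L \<le> U"
    and symm: "\<And>k. f (c - k) = f k"
  shows "c = L + U"
proof -
  have "0 < f (c - L)" "0 < f (c - U)" using symm support \<open>L \<le> U\<close> by auto
  then show ?thesis using support by fastforce
qed

lemma center_mean_cases:
  fixes m r b n :: nat
  assumes "0 < m" "m < r + b" "0 < r" "0 < b"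
    and center: "n = (m - b) + min m r" and mean: "n * (r + b) = 2 * m * r"
  shows "(r = b \<and> n = m) \<or> (2 * m = r + b \<and> n = r)"
proof -
  have mean': "int n * (int r + int b) = 2 * int m * int r"
    using arg_cong[OF mean, of int] by simp
  consider "m \<le> b" "m \<le> r" | "m \<le> b" "r < m" | "b < m" "m \<le> r" | "b < m" "r < m" by linarith
  then show ?thesis
  proof cases
    case 1
    with center have "n = m" by simp
    with mean' have "int m * (int b - int r) = 0" by (simp add: algebra_simps)
    with \<open>n = m\<close> \<open>0 < m\<close> show ?thesis by simp
  next
    case 2
    with center have "n = r" by simp
    with mean' have "int r * (int r + int b - 2 * int m) = 0" by (simp add: algebra_simps)
    with \<open>n = r\<close> \<open>0 < r\<close> show ?thesis by simp
  next
    case 3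
    with center have n: "int n = 2 * int m - int b" by simp
    with mean' have "int b * (2 * int m - int r - int b) = 0" by (simp add: algebra_simps)
    with n \<open>0 < b\<close> show ?thesis by simp
  next
    case 4
    with center have n: "int n = int m - int b + int r" by simp
    with mean' have "(int b - int r) * (int m - (int r + int b)) = 0" by (simp add: algebra_simps)
    with n \<open>m < r + b\<close> show ?thesis by simp
  qed
qed

definition mid_pmf :: "nat \<Rightarrow> nat \<Rightarrow> real" where
  "mid_pmf a j = (real (a choose j))\<^sup>2 / real ((2 * a) choose (2 * j))"

lemma hyp_pmf_balanced_mid: "hyp_pmf (2 * j) a a (int j) = mid_pmf a j"
  by (simp add: hyp_pmf_nat mid_pmf_def power2_eq_square mult_2)

lemma hyp_pmf_half_sample_mid:
  assumes "j \<le> a"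
  shows "hyp_pmf a (2 * j) (2 * a - 2 * j) (int j) = mid_pmf a j"
proof -
  have e: "2 * j - j = j" "2 * a - 2 * j - (a - j) = a - j" "2 * a - a = a"
    "2 * a - 2 * j = 2 * (a - j)" "2 * j + 2 * (a - j) = 2 * a" "2 * (a - j) + j - a = a - j"
    using assms by auto
  have "hyp_pmf a (2 * j) (2 * a - 2 * j) (int j)
      = fact (2 * j) / (fact j * fact j) * (fact (2 * (a - j)) / (fact (a - j) * fact (a - j)))
        / (fact (2 * a) / (fact a * fact a))"
    using assms by (simp add: hyp_pmf_nat binomial_fact e)
  also have "\<dots> = mid_pmf a j"
    using assms by (simp add: mid_pmf_def binomial_fact field_simps power2_eq_square e(4-6) diff_mult_distrib)
  finally show ?thesis .
qed

lemma symmetric_hyp_half: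
  assumes "m \<le> r + b" and var_pos: "0 < hyp_var m r b"
    and symm: "\<And>k. hyp_pmf m r b (int n - k) = hyp_pmf m r b k"
    and mean: "hyp_mean m r b = real n / 2" and n: "n = 2 * j"
  obtains a where "r + b = 2 * a" "1 \<le> j" "j < a"
    "hyp_var m r b = real j * (real a - real j) / (2 * real a - 1)"
    "hyp_pmf m r b (int j) = mid_pmf a j"
proof -
  have pos: "0 < m" "m < r + b" "0 < r" "0 < b"
    using var_pos hyp_var_pos_iff[OF assms(1)] by auto
  have "int n = int (m - b) + int (min m r)"
    by (rule symmetric_support_center[OF hyp_pmf_pos_iff[OF assms(1)] _ symm]) (use assms(1) in auto)
  then have center: "n = (m - b) + min m r" by linarith
  have "real (n * (r + b)) = real (2 * m * r)"
    using mean hyp_mean_eq[OF assms(1)] pos by (simp add: field_simps)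
  then have "n * (r + b) = 2 * m * r" by (simp only: of_nat_eq_iff)
  with center have "(r = b \<and> n = m) \<or> (2 * m = r + b \<and> n = r)"
    by (rule center_mean_cases[OF pos])
  then show ?thesis
  proof
    assume "r = b \<and> n = m"
    then have rb: "r + b = 2 * r" "m = 2 * j" "b = r" and j: "1 \<le> j" "j < r" using pos n by auto
    have "hyp_var m r b = real j * (real r - real j) / (2 * real r - 1)"
      unfolding hyp_var_eq[OF assms(1)] unfolding rb using j
      by (simp add: field_simps power2_eq_square of_nat_diff)
    with rb j show ?thesis using that[of r] hyp_pmf_balanced_mid[of j r] by simp
  next
    assume "2 * m = r + b \<and> n = r"
    then have rb: "r + b = 2 * m" "r = 2 * j" "b = 2 * m - 2 * j" and j: "1 \<le> j" "j < m"
      using pos n by auto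
    have "hyp_var m r b = real j * (real m - real j) / (2 * real m - 1)"
      unfolding hyp_var_eq[OF assms(1)] unfolding rb using j
      by (simp add: field_simps power2_eq_square of_nat_diff)
    with rb j show ?thesis using that[of m] hyp_pmf_half_sample_mid[of j m] by simp
  qed
qed

section \<open>Minimising \<sigma> f(n/2)\<close>

lemma mid_pmf_reflect:
  assumes "j \<le> a"
  shows "mid_pmf a (a - j) = mid_pmf a j"
proof -
  have "(2 * a) choose (2 * (a - j)) = (2 * a) choose (2 * j)"
    using binomial_symmetric[of "2 * j" "2 * a"] assms by (simp add: diff_mult_distrib2)
  then show ?thesis
    using binomial_symmetric[OF assms] by (simp add: mid_pmf_def)
qed

lemma mid_pmf_Suc:
  assumes "j < a"
  shows "mid_pmf a (Suc j) = mid_pmf a j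
    * ((real a - real j) * (2 * real j + 1) / ((real j + 1) * (2 * (real a - real j) - 1)))"
proof -
  have c: "real (a choose Suc j) = real (a choose j) * (real a - real j) / (real j + 1)"
    using assms by (simp add: real_choose_Suc of_nat_diff)
  have d: "real ((2 * a) choose (2 * Suc j)) = real ((2 * a) choose (2 * j))
      * (2 * (real a - real j) * (2 * (real a - real j) - 1) / ((2 * real j + 1) * (2 * real j + 2)))"
    using assms by (simp add: real_choose_Suc of_nat_diff field_simps)
  have "(C * u / (y + 1))\<^sup>2 / (D * (2 * u * (2 * u - 1) / ((2 * y + 1) * (2 * y + 2))))
      = C\<^sup>2 / D * (u * (2 * y + 1) / ((y + 1) * (2 * u - 1)))"
    if "0 \<le> y" "0 < u" "2 * u - 1 \<noteq> 0" "D \<noteq> 0" for C D u y :: real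
  proof -
    have "y + 1 \<noteq> 0" "2 * y + 1 \<noteq> 0" "2 * y + 2 \<noteq> 0" "u \<noteq> 0" using that by auto
    with that show ?thesis by (simp add: power2_eq_square divide_simps) (simp add: algebra_simps)
  qed
  from this[of "real j" "real a - real j" "real ((2 * a) choose (2 * j))" "real (a choose j)"] assms
  show ?thesis
    unfolding mid_pmf_def c d by (simp add: algebra_simps)
qed

text \<open>For N = 2a and n = 2j this is sigma^2 f(n/2)^2, by symmetric_hyp_half.\<close>
definition sd_mid_sq :: "nat \<Rightarrow> nat \<Rightarrow> real" where
  "sd_mid_sq a j = real j * (real a - real j) / (2 * real a - 1) * (mid_pmf a j)\<^sup>2"

lemma sd_mid_sq_ratio_ineq:
  fixes x y :: real
  assumes "1 \<le> y" "2 * y + 2 \<le> x"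
  shows "y * (x - y) < (y + 1) * (x - y - 1) * ((x - y) * (2 * y + 1) / ((y + 1) * (2 * (x - y) - 1)))\<^sup>2"
proof -
  define D where "D = (y + 1) * (2 * (x - y) - 1)\<^sup>2"
  have D: "0 < D" using assms by (simp add: D_def)
  have "(x - y) * (x - y - 1) * (2 * y + 1)\<^sup>2 - y * (y + 1) * (2 * (x - y) - 1)\<^sup>2 = x * (x - 2 * y - 1)"
    by (simp add: algebra_simps power2_eq_square)
  moreover have "0 < x * (x - 2 * y - 1)" using assms by simp
  ultimately have "y * (y + 1) * (2 * (x - y) - 1)\<^sup>2 < (x - y) * (x - y - 1) * (2 * y + 1)\<^sup>2"
    by linarith
  then have "(x - y) * (y * (y + 1) * (2 * (x - y) - 1)\<^sup>2) / D < (x - y) * ((x - y) * (x - y - 1) * (2 * y + 1)\<^sup>2) / D"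
    using assms D by (intro divide_strict_right_mono mult_strict_left_mono) auto
  moreover have "(x - y) * (y * (y + 1) * (2 * (x - y) - 1)\<^sup>2) / D = y * (x - y)"
    using assms by (simp add: D_def)
  moreover have "(x - y) * ((x - y) * (x - y - 1) * (2 * y + 1)\<^sup>2) / D
      = (y + 1) * (x - y - 1) * ((x - y) * (2 * y + 1) / ((y + 1) * (2 * (x - y) - 1)))\<^sup>2"
    using assms unfolding D_def by (simp add: power_divide power_mult_distrib power2_eq_square ac_simps)
  ultimately show ?thesis by simp
qed

lemma sd_mid_sq_less_Suc:
  assumes "1 \<le> j" "2 * j + 2 \<le> a"
  shows "sd_mid_sq a j < sd_mid_sq a (Suc j)"
proof -
  let ?x = "real a" and ?y = "real j"
  define \<rho> where "\<rho> = (?x - ?y) * (2 * ?y + 1) / ((?y + 1) * (2 * (?x - ?y) - 1))"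
  have "j < a" using assms by simp
  have c: "0 < (mid_pmf a j)\<^sup>2 / (2 * ?x - 1)"
    using assms by (simp add: mid_pmf_def)
  have "sd_mid_sq a j = ?y * (?x - ?y) * ((mid_pmf a j)\<^sup>2 / (2 * ?x - 1))"
    by (simp add: sd_mid_sq_def)
  also have "\<dots> < (?y + 1) * (?x - ?y - 1) * \<rho>\<^sup>2 * ((mid_pmf a j)\<^sup>2 / (2 * ?x - 1))"
    using sd_mid_sq_ratio_ineq[of ?y ?x] assms c unfolding \<rho>_def by (intro mult_strict_right_mono) auto
  also have "\<dots> = sd_mid_sq a (Suc j)"
    unfolding sd_mid_sq_def mid_pmf_Suc[of j a, OF \<open>j < a\<close>] \<rho>_def[symmetric]
    by (simp add: power_mult_distrib diff_diff_eq ac_simps)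
  finally show ?thesis .
qed

lemma sd_mid_sq_reflect: "j \<le> a \<Longrightarrow> sd_mid_sq a (a - j) = sd_mid_sq a j"
  by (simp add: sd_mid_sq_def mid_pmf_reflect of_nat_diff)

lemma sd_mid_sq_one_less:
  assumes "2 \<le> j" "2 * j \<le> a"
  shows "sd_mid_sq a 1 < sd_mid_sq a j"
  using assms
proof (induction j rule: dec_induct)
  case base
  then show ?case using sd_mid_sq_less_Suc[of 1 a] by (simp add: numeral_2_eq_2)
next
  case (step j)
  then have "sd_mid_sq a 1 < sd_mid_sq a j" by simp
  also have "\<dots> < sd_mid_sq a (Suc j)" using sd_mid_sq_less_Suc[of j a] step by simp
  finally show ?case .
qed

lemma sd_mid_sq_minimum:
  assumes "1 \<le> j" "j < a"
  shows "sd_mid_sq a 1 \<le> sd_mid_sq a j \<and> (sd_mid_sq a 1 = sd_mid_sq a j \<longleftrightarrow> j = 1 \<or> j + 1 = a)"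
proof (cases "j = 1 \<or> j + 1 = a")
  case True
  then have "sd_mid_sq a j = sd_mid_sq a 1"
    using sd_mid_sq_reflect[of 1 a] assms by (auto simp: add.commute)
  then show ?thesis using True by simp
next
  case False
  have "sd_mid_sq a 1 < sd_mid_sq a j"
  proof (cases "2 * j \<le> a")
    case True
    then show ?thesis using sd_mid_sq_one_less[of j a] False assms by simp
  next
    case False
    have "sd_mid_sq a 1 < sd_mid_sq a (a - j)"
      using sd_mid_sq_one_less[of "a - j" a] \<open>\<not> (j = 1 \<or> j + 1 = a)\<close> False assms by simp
    also have "\<dots> = sd_mid_sq a j" using sd_mid_sq_reflect[of j a] assms by simp
    finally show ?thesis .
  qed
  then show ?thesis using False by simp
qed

lemma sd_mid_sq_one:
  assumes "1 \<le> a"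
  shows "sd_mid_sq a 1 = (real a - 1) * (real a)\<^sup>2 / (2 * real a - 1)^3"
proof -
  have "real ((2 * a) choose 2) = real a * (2 * real a - 1)"
    using assms by (simp add: choose_two of_nat_diff)
  then have mid: "mid_pmf a 1 = real a / (2 * real a - 1)"
    using assms by (simp add: mid_pmf_def power2_eq_square)
  show ?thesis
    unfolding sd_mid_sq_def mid by (simp add: power_divide power2_eq_square power3_eq_cube)
qed

lemma one_eighth_less_sd_mid_sq_one:
  assumes "2 \<le> a"
  shows "1 / 8 < sd_mid_sq a 1"
proof -
  have "8 * ((real a - 1) * (real a)\<^sup>2) - (2 * real a - 1)^3 = 4 * (real a)\<^sup>2 - 6 * real a + 1"
    by (simp add: power2_eq_square power3_eq_cube algebra_simps)
  moreover have "4 * (real a)\<^sup>2 \<ge> 8 * real a" using assms by (simp add: power2_eq_square)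
  ultimately have "1 / 8 * (2 * real a - 1)^3 < (real a - 1) * (real a)\<^sup>2" using assms by linarith
  moreover have "0 < (2 * real a - 1)^3" using assms by simp
  ultimately show ?thesis
    using assms sd_mid_sq_one[of a] by (simp add: less_divide_eq)
qed

theorem lemma4p2:
  fixes m r b N n :: nat and \<sigma> :: real and f :: "int \<Rightarrow> real"
  assumes "m \<le> r + b"
    and "N = r + b"
    and "f = hyp_pmf m r b"
    and "hyp_mean m r b = real n / 2"
    and "\<forall>k. f (int n - k) = f k"
    and "\<sigma> = sqrt (hyp_var m r b)"
    and "\<sigma> > 0"
    and "even n"
  shows "sqrt 2 / 4 < sqrt ((real N - 2) * (real N)^2 / (8 * (real N - 1)^3))
    \<and> sqrt ((real N - 2) * (real N)^2 / (8 * (real N - 1)^3)) \<le> \<sigma> * f (int (n div 2))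
    \<and> (sqrt ((real N - 2) * (real N)^2 / (8 * (real N - 1)^3)) = \<sigma> * f (int (n div 2))
         \<longleftrightarrow> n = 2 \<or> n + 2 = N)"
proof -
  obtain j where n: "n = 2 * j" using \<open>even n\<close> by (rule evenE)
  have "0 < hyp_var m r b" using assms(6,7) by simp
  with assms(1,3,5) obtain a where N: "N = 2 * a" and j: "1 \<le> j" "j < a"
    and var: "hyp_var m r b = real j * (real a - real j) / (2 * real a - 1)"
    and mid: "f (int (n div 2)) = mid_pmf a j"
    by (elim symmetric_hyp_half[OF _ _ _ assms(4) n]) (auto simp: assms(2) n)
  have "0 \<le> mid_pmf a j" by (simp add: mid_pmf_def)
  then have "\<sigma> * f (int (n div 2)) = sqrt (sd_mid_sq a j)"
    unfolding assms(6) var mid sd_mid_sq_def real_sqrt_mult by simp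
  moreover have "(real N - 2) * (real N)^2 / (8 * (real N - 1)^3) = sd_mid_sq a 1"
  proof -
    have "(real N - 2) * (real N)^2 = 8 * ((real a - 1) * (real a)\<^sup>2)" "real N - 1 = 2 * real a - 1"
      by (simp_all add: N power2_eq_square algebra_simps)
    then have "(real N - 2) * (real N)^2 / (8 * (real N - 1)^3) = (real a - 1) * (real a)\<^sup>2 / (2 * real a - 1)^3"
      by (simp only: mult_divide_mult_cancel_left_if) simp
    also have "\<dots> = sd_mid_sq a 1" using j by (intro sd_mid_sq_one[symmetric]) simp
    finally show ?thesis .
  qed
  moreover have "sqrt 2 / 4 = sqrt (1 / 8)"
    by (rule real_sqrt_unique[symmetric]) (auto simp: power_divide)
  ultimately show ?thesis
    using one_eighth_less_sd_mid_sq_one[of a] sd_mid_sq_minimum[OF j] j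
    by (auto simp: n N)
qed

end
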